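(* Let $A$ be a unital associative (not necessarily commutative) $\mathbb{K}$-algebra. The right-shift operator $P_A$ on $(T(A),\bullet^\ell)$ satisfies the $TD$-relation: for all $U,V\in T(A)$, $$P_A(U)\bullet^\ell P_A(V)=P_A\bigl(U\bullet^\ell P_A(V)\bigr)+P_A\bigl(P_A(U)\bullet^\ell V\bigr)-P_A\bigl(U\bullet^\ell P_A(1_{\mathbb{K}})\bullet^\ell V\bigr).$$ Hence $(T(A),\bullet^\ell,P_A)$ is a unital $TD$-algebra.
   Context: $\mathbb{K}$ is a field of characteristic $0$, $A$ has product $[a;b]$ and unit $1_A$. $T(A)=\bigoplus_{n\ge0}A^{\otimes n}$ with $A^{\otimes0}=\mathbb{K}1_{\mathbb{K}}$; $a\otimes1_{\mathbb{K}}$ is identified with $a$. The left-shift shuffle $\bullet^\ell$ is the bilinear product on $T(A)$ with $k1_{\mathbb{K}}\bullet^\ell U=kU=U\bullet^\ell k1_{\mathbb{K}}$ and, for $a,b\in A$, $U,V\in T(A)$, $(a\otimes U)\bullet^\ell(b\otimes V)=a\otimes\bigl(U\bullet^\ell(b\otimes V)\bigr)+b\otimes\bigl((a\otimes U)\bullet^\ell V\bigr)-[a;b]\otimes1_A\otimes(U\bullet^\ell V)$; it is associative with unit $1_{\mathbb{K}}$. The right-shift map $P_A:T(A)\to T(A)$ is the linear map $P_A(U)=1_A\otimes U$ for words $U$ of positive length and $P_A(1_{\mathbb{K}})=1_A$. A $TD$-algebra is a pair $(B,P)$, $B$ a unital associative algebra, $P:B\to B$ linear with $P(x)P(y)=P\bigl(P(x)y+xP(y)\bigr)-P\bigl(x\,P(1_B)\,y\bigr)$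 for all $x,y$. *)

theory Defs
  imports Main "HOL-Library.Poly_Mapping"
begin

text \<open>
  A word a1 (x) ... (x) an of T(A) is represented by the list [a1,...,an];
  the empty list represents 1_K.  The free K-vector space on words is
  'a list =>0 k (finitely supported coefficient functions).  The tensor algebra T(A)
  is the quotient of this free space by the subspace tensor_rel of multilinearity
  relations; an identity holds in T(A) iff the difference of representatives lies
  in tensor_rel.
\<close>

locale K_algebra =
  fixes sc :: "'k::field_char_0 \<Rightarrow> 'a::ring_1 \<Rightarrow> 'a"
  assumes sc_one: "sc 1 x = x"
    and sc_assoc: "sc c (sc d x) = sc (c * d) x"
    and sc_add_right: "sc c (x + y) = sc c x + sc c y"
    and sc_add_left: "sc (c + d) x = sc c x + sc d x"
    and sc_mult_left: "sc c (x * y) = sc c x * y"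
    and sc_mult_right: "sc c (x * y) = x * sc c y"

definition fscale :: "'k::field \<Rightarrow> ('a list \<Rightarrow>\<^sub>0 'k) \<Rightarrow> ('a list \<Rightarrow>\<^sub>0 'k)" where
  "fscale c X = Poly_Mapping.map (\<lambda>t. c * t) X"

definition prep :: "'a \<Rightarrow> ('a list \<Rightarrow>\<^sub>0 'k::field) \<Rightarrow> ('a list \<Rightarrow>\<^sub>0 'k)" where
  "prep a X = (\<Sum>w\<in>Poly_Mapping.keys X. Poly_Mapping.single (a # w) (Poly_Mapping.lookup X w))"

definition unitK :: "'a list \<Rightarrow>\<^sub>0 'k::field" where
  "unitK = Poly_Mapping.single [] 1"

fun wshuf :: "'a::ring_1 list \<Rightarrow> 'a list \<Rightarrow> ('a list \<Rightarrow>\<^sub>0 'k::field)" where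
  "wshuf [] V = Poly_Mapping.single V 1"
| "wshuf U [] = Poly_Mapping.single U 1"
| "wshuf (a # U) (b # V) =
     prep a (wshuf U (b # V)) + prep b (wshuf (a # U) V)
     - prep (a * b) (prep 1 (wshuf U V))"

definition shuf :: "('a::ring_1 list \<Rightarrow>\<^sub>0 'k::field) \<Rightarrow> ('a list \<Rightarrow>\<^sub>0 'k) \<Rightarrow> ('a list \<Rightarrow>\<^sub>0 'k)" where
  "shuf X Y = (\<Sum>u\<in>Poly_Mapping.keys X. \<Sum>v\<in>Poly_Mapping.keys Y. fscale (Poly_Mapping.lookup X u * Poly_Mapping.lookup Y v) (wshuf u v))"

text \<open>Right-shift map P_A: 1_A (x) U on words of positive length, and P_A(1_K) = 1_A
  (which is the word [1_A], i.e. again 1_A prepended to the empty word).\<close>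
definition PA :: "('a::ring_1 list \<Rightarrow>\<^sub>0 'k::field) \<Rightarrow> ('a list \<Rightarrow>\<^sub>0 'k)" where
  "PA X = (\<Sum>w\<in>Poly_Mapping.keys X. Poly_Mapping.single (if w = [] then [1] else 1 # w) (Poly_Mapping.lookup X w))"

inductive_set tensor_rel :: "('k::field_char_0 \<Rightarrow> 'a \<Rightarrow> 'a) \<Rightarrow> ('a::ring_1 list \<Rightarrow>\<^sub>0 'k) set"
  for sc :: "'k \<Rightarrow> 'a \<Rightarrow> 'a" where
  rel_zero: "0 \<in> tensor_rel sc"
| rel_add_gen: "Poly_Mapping.single (u @ [x + y] @ v) 1 - Poly_Mapping.single (u @ [x] @ v) 1
      - Poly_Mapping.single (u @ [y] @ v) 1 \<in> tensor_rel sc"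
| rel_scale_gen: "Poly_Mapping.single (u @ [sc c x] @ v) 1 - Poly_Mapping.single (u @ [x] @ v) c
      \<in> tensor_rel sc"
| rel_add: "X \<in> tensor_rel sc \<Longrightarrow> Y \<in> tensor_rel sc \<Longrightarrow> X + Y \<in> tensor_rel sc"
| rel_scale: "X \<in> tensor_rel sc \<Longrightarrow> fscale c X \<in> tensor_rel sc"

definition eqT :: "('k::field_char_0 \<Rightarrow> 'a \<Rightarrow> 'a) \<Rightarrow> ('a::ring_1 list \<Rightarrow>\<^sub>0 'k) \<Rightarrow> ('a list \<Rightarrow>\<^sub>0 'k) \<Rightarrow> bool" where
  "eqT sc X Y \<longleftrightarrow> X - Y \<in> tensor_rel sc"

end

theory Submission
  imports Defs
begin

text \<open>
  The unit 1_A behaves like a central element for the left-shift shuffle, and P_A is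
  multiplication by it: P_A(U) \<bullet> V = P_A(U \<bullet> V), because in the recursion for
  (1_A \<otimes> U) \<bullet> (b \<otimes> V) the middle term b \<otimes> 1_A \<otimes> (U \<bullet> V) cancels the correction
  term [1_A; b] \<otimes> 1_A \<otimes> (U \<bullet> V); and U \<bullet> P_A(1_K) = P_A(U) by the same cancellation.
  Hence the last two terms of the right-hand side cancel, and the first one equals
  P_A(U) \<bullet> P_A(V).  All of this holds already for representatives in the free space on
  words.
\<close>

lemma poly_mapping_single_add_induct [case_names zero single_add]:
  assumes "P 0" and "\<And>X w c. P X \<Longrightarrow> P (Poly_Mapping.single w c + X)"
  shows "P X"
proof (induction X rule: update_induct)
  case const
  then show ?case using assms(1) .
next
  case (update X w c)
  have "Poly_Mapping.update w c X = Poly_Mapping.single w c + X"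
    using update(1)
    by (intro poly_mapping_eqI) (auto simp: lookup_update lookup_add lookup_single in_keys_iff)
  then show ?case using assms(2) update(3) by simp
qed

lemma additive_poly_mapping_eqI:
  fixes f g :: "('a \<Rightarrow>\<^sub>0 'b::monoid_add) \<Rightarrow> 'c::plus"
  assumes "\<And>X Y. f (X + Y) = f X + f Y" and "\<And>X Y. g (X + Y) = g X + g Y"
    and "\<And>w c. f (Poly_Mapping.single w c) = g (Poly_Mapping.single w c)"
  shows "f X = g X"
proof (induction X rule: poly_mapping_single_add_induct)
  case zero
  show ?case using assms(3)[of undefined 0] by simp
next
  case (single_add X w c)
  then show ?case by (simp add: assms)
qed

lemma sum_keys_add:
  fixes X Y :: "'a \<Rightarrow>\<^sub>0 'b::monoid_add"
  assumes "\<And>w. g w 0 = 0" and "\<And>w a b. g w (a + b) = g w a + g w b"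
  shows "(\<Sum>w\<in>Poly_Mapping.keys (X + Y). g w (Poly_Mapping.lookup (X + Y) w))
       = (\<Sum>w\<in>Poly_Mapping.keys X. g w (Poly_Mapping.lookup X w))
       + (\<Sum>w\<in>Poly_Mapping.keys Y. g w (Poly_Mapping.lookup Y w))"
proof -
  let ?S = "Poly_Mapping.keys X \<union> Poly_Mapping.keys Y"
  have extend: "(\<Sum>w\<in>Poly_Mapping.keys Z. g w (Poly_Mapping.lookup Z w))
              = (\<Sum>w\<in>?S. g w (Poly_Mapping.lookup Z w))" if "Poly_Mapping.keys Z \<subseteq> ?S" for Z
    using that by (intro sum.mono_neutral_left) (auto simp: in_keys_iff assms(1))
  have "(\<Sum>w\<in>Poly_Mapping.keys (X + Y). g w (Poly_Mapping.lookup (X + Y) w))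
      = (\<Sum>w\<in>?S. g w (Poly_Mapping.lookup (X + Y) w))"
    using keys_add by (rule extend)
  also have "\<dots> = (\<Sum>w\<in>?S. g w (Poly_Mapping.lookup X w)) + (\<Sum>w\<in>?S. g w (Poly_Mapping.lookup Y w))"
    by (simp add: lookup_add assms(2) sum.distrib)
  finally show ?thesis
    by (simp add: extend)
qed

lemma sum_keys_single:
  assumes "\<And>w. g w 0 = 0"
  shows "(\<Sum>w\<in>Poly_Mapping.keys (Poly_Mapping.single u c). g w (Poly_Mapping.lookup (Poly_Mapping.single u c) w))
       = g u c"
  using assms by (cases "c = 0") simp_all

lemma lookup_fscale: "Poly_Mapping.lookup (fscale c X) w = c * Poly_Mapping.lookup X w"
  by (simp add: fscale_def map.rep_eq when_def)

lemma fscale_add: "fscale c (X + Y) = fscale c X + fscale c Y"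
  by (rule poly_mapping_eqI) (simp add: lookup_fscale lookup_add algebra_simps)

lemma fscale_add_left: "fscale (c + d) X = fscale c X + fscale d X"
  by (rule poly_mapping_eqI) (simp add: lookup_fscale lookup_add algebra_simps)

lemma fscale_zero_left [simp]: "fscale 0 X = 0"
  by (rule poly_mapping_eqI) (simp add: lookup_fscale)

lemma fscale_single: "fscale c (Poly_Mapping.single w d) = Poly_Mapping.single w (c * d)"
  by (rule poly_mapping_eqI) (simp add: lookup_fscale lookup_single when_def)

lemma prep_one_eq_PA: "prep 1 X = PA X"
  unfolding PA_def prep_def by (rule sum.cong) auto

lemma prep_single [simp]: "prep a (Poly_Mapping.single w c) = Poly_Mapping.single (a # w) c"
  unfolding prep_def by (rule sum_keys_single) simp

lemma prep_add: "prep a (X + Y) = prep a X + prep a Y"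
  unfolding prep_def by (rule sum_keys_add) (simp_all add: single_add)

lemma PA_single: "PA (Poly_Mapping.single w c) = Poly_Mapping.single (1 # w) c"
  by (simp flip: prep_one_eq_PA)

lemma PA_add: "PA (X + Y) = PA X + PA Y"
  by (simp add: prep_add flip: prep_one_eq_PA)

lemma PA_fscale: "PA (fscale c X) = fscale c (PA X)"
  by (rule additive_poly_mapping_eqI[where f = "\<lambda>X. PA (fscale c X)"])
    (simp_all add: PA_add fscale_add PA_single fscale_single)

lemma shuf_add_left: "shuf (X + X') Y = shuf X Y + shuf X' Y"
  unfolding shuf_def
  by (rule sum_keys_add) (simp_all add: distrib_right fscale_add_left sum.distrib)

lemma shuf_add_right: "shuf X (Y + Y') = shuf X Y + shuf X Y'"
  unfolding shuf_def sum.distrib[symmetric]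
  by (intro sum.cong refl sum_keys_add) (simp_all add: distrib_left fscale_add_left)

lemma shuf_single:
  "shuf (Poly_Mapping.single u c) (Poly_Mapping.single v d) = fscale (c * d) (wshuf u v)"
  unfolding shuf_def by (simp add: sum_keys_single)

lemma wshuf_Nil_right [simp]: "wshuf u [] = Poly_Mapping.single u 1"
  by (cases u) simp_all

lemma wshuf_one_right: "wshuf u [1] = Poly_Mapping.single (1 # u) 1"
  by (induction u) simp_all

lemma wshuf_one_Cons_left: "wshuf (1 # u) v = PA (wshuf u v)"
  unfolding prep_one_eq_PA[symmetric]
proof (induction v)
  case Nil
  then show ?case by (cases u) simp_all
next
  case (Cons b v)
  then show ?case by (cases u) simp_all
qed

lemma shuf_PA_left: "shuf (PA X) Y = PA (shuf X Y)"
proof (rule additive_poly_mapping_eqI[where f = "\<lambda>X. shuf (PA X) Y"])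
  fix u c
  show "shuf (PA (Poly_Mapping.single u c)) Y = PA (shuf (Poly_Mapping.single u c) Y)"
    by (rule additive_poly_mapping_eqI[where f = "shuf (PA (Poly_Mapping.single u c))"])
      (simp_all add: shuf_add_right PA_add PA_single shuf_single wshuf_one_Cons_left PA_fscale)
qed (simp_all add: shuf_add_left PA_add)

lemma PA_unitK: "PA unitK = Poly_Mapping.single [1] 1"
  by (simp add: unitK_def PA_single)

lemma shuf_PA_unitK: "shuf X (PA unitK) = PA X"
  by (rule additive_poly_mapping_eqI[where f = "\<lambda>X. shuf X (PA unitK)"])
    (simp_all add: shuf_add_left PA_add PA_unitK shuf_single wshuf_one_right fscale_single PA_single)

theorem proposition4p6:
  fixes sc :: "'k::field_char_0 \<Rightarrow> 'a::ring_1 \<Rightarrow> 'a"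
    and U V :: "'a list \<Rightarrow>\<^sub>0 'k"
  assumes "K_algebra sc"
  shows "eqT sc (shuf (PA U) (PA V))
           (PA (shuf U (PA V)) + PA (shuf (PA U) V) - PA (shuf (shuf U (PA unitK)) V))"
proof -
  have "PA (shuf U (PA V)) + PA (shuf (PA U) V) - PA (shuf (shuf U (PA unitK)) V)
      = PA (shuf U (PA V))"
    by (simp add: shuf_PA_unitK)
  also have "\<dots> = shuf (PA U) (PA V)"
    by (simp add: shuf_PA_left)
  finally show ?thesis
    unfolding eqT_def by (simp add: tensor_rel.rel_zero)
qed

end
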